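(* Let $p_0,p_1,p_2$ be positive integers with $\gcd(p_0,p_1,p_2)=1$, and put $n=p_0+p_1+p_2$. Let $E=(\mathbb{Z}/n\mathbb{Z})\times\{0,1,2\}$ and define permutations $\sigma_0,\sigma_1$ of $E$ by $$\sigma_0(m,0)=(m,1),\quad \sigma_0(m,1)=(m,2),\quad \sigma_0(m,2)=(m,0),$$ $$\sigma_1(m,0)=(m-p_1,2),\quad \sigma_1(m,1)=(m-p_2,0),\quad \sigma_1(m,2)=(m-p_0,1),$$ with arithmetic in the first coordinate modulo $n$. Then the permutations $\sigma_0\sigma_1$ and $\sigma_1\sigma_0$ commute.
   Context: These $\sigma_0,\sigma_1$ are the monodromy permutations of the dessin drawn on the rational billiards surface of the triangle with angles $(p_0\pi/n,p_1\pi/n,p_2\pi/n)$, acting on its $3n$ edges labeled $(m,i)$. Products are composition of functions: $(\sigma_0\sigma_1)(e)=\sigma_0(\sigma_1(e))$. *)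

theory Defs
  imports Main
begin

text \<open>Edges (m,i) with m in Z/nZ represented by 0..<n, i in {0,1,2}.\<close>

definition edges :: "nat \<Rightarrow> (int \<times> nat) set" where
  "edges n = {0..<int n} \<times> {0,1,2}"

definition sigma0 :: "int \<times> nat \<Rightarrow> int \<times> nat" where
  "sigma0 e = (case e of (m, i) \<Rightarrow>
      if i = 0 then (m, 1) else if i = 1 then (m, 2) else (m, 0))"

definition sigma1 :: "nat \<Rightarrow> nat \<Rightarrow> nat \<Rightarrow> int \<times> nat \<Rightarrow> int \<times> nat" where
  "sigma1 p0 p1 p2 e = (let n = int (p0 + p1 + p2) in case e of (m, i) \<Rightarrow>
      if i = 0 then ((m - int p1) mod n, 2)
      else if i = 1 then ((m - int p2) mod n, 0)
      else ((m - int p0) mod n, 1))"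

end

theory Submission
  imports Defs
begin

(* Both products preserve the level i of an edge (m, i) and translate m by an amount depending
   only on i: sigma1 sigma0 by p2, p0, p1 and sigma0 sigma1 by p1, p2, p0 on the levels 0, 1, 2.
   Translations of the same cyclic group commute. *)

definition level_shift :: "int \<Rightarrow> (nat \<Rightarrow> int) \<Rightarrow> int \<times> nat \<Rightarrow> int \<times> nat" where
  "level_shift n d e = (case e of (m, i) \<Rightarrow> ((m - d i) mod n, i))"

lemma level_shift_commute:
  "level_shift n d (level_shift n d' e) = level_shift n d' (level_shift n d e)"
proof -
  have "((m - a) mod n - b) mod n = ((m - b) mod n - a) mod n" for m a b :: int
    by (metis diff_right_commute mod_diff_left_eq)
  then show ?thesis
    by (simp add: level_shift_def split: prod.split)
qed

lemma sigma1_sigma0_eq_level_shift: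
  assumes "i \<le> 2"
  shows "(sigma1 p0 p1 p2 \<circ> sigma0) (m, i)
       = level_shift (int (p0 + p1 + p2))
           (\<lambda>i. int (if i = 0 then p2 else if i = 1 then p0 else p1)) (m, i)"
  using assms by (auto simp: sigma0_def sigma1_def level_shift_def Let_def le_Suc_eq)

lemma sigma0_sigma1_eq_level_shift:
  assumes "i \<le> 2"
  shows "(sigma0 \<circ> sigma1 p0 p1 p2) (m, i)
       = level_shift (int (p0 + p1 + p2))
           (\<lambda>i. int (if i = 0 then p1 else if i = 1 then p2 else p0)) (m, i)"
  using assms by (auto simp: sigma0_def sigma1_def level_shift_def Let_def le_Suc_eq)

theorem lemma1:
  fixes p0 p1 p2 :: nat
  assumes "p0 > 0" and "p1 > 0" and "p2 > 0"
    and "gcd p0 (gcd p1 p2) = 1"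
  shows "\<forall>e \<in> edges (p0 + p1 + p2).
           (sigma0 \<circ> sigma1 p0 p1 p2) ((sigma1 p0 p1 p2 \<circ> sigma0) e)
         = (sigma1 p0 p1 p2 \<circ> sigma0) ((sigma0 \<circ> sigma1 p0 p1 p2) e)"
proof
  fix e assume "e \<in> edges (p0 + p1 + p2)"
  then obtain m i where e: "e = (m, i)" and "i \<le> 2"
    by (auto simp: edges_def)
  define n where "n = int (p0 + p1 + p2)"
  define a :: "nat \<Rightarrow> int" where "a i = int (if i = 0 then p2 else if i = 1 then p0 else p1)" for i
  define b :: "nat \<Rightarrow> int" where "b i = int (if i = 0 then p1 else if i = 1 then p2 else p0)" for i
  have ba: "\<And>m. (sigma1 p0 p1 p2 \<circ> sigma0) (m, i) = level_shift n a (m, i)"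
   and ab: "\<And>m. (sigma0 \<circ> sigma1 p0 p1 p2) (m, i) = level_shift n b (m, i)"
    using \<open>i \<le> 2\<close> sigma1_sigma0_eq_level_shift sigma0_sigma1_eq_level_shift
    unfolding n_def a_def b_def by blast+
  have "(sigma0 \<circ> sigma1 p0 p1 p2) ((sigma1 p0 p1 p2 \<circ> sigma0) e)
      = level_shift n b (level_shift n a (m, i))"
    by (simp add: e ba ab level_shift_def del: comp_apply)
  also have "\<dots> = level_shift n a (level_shift n b (m, i))"
    by (rule level_shift_commute)
  also have "\<dots> = (sigma1 p0 p1 p2 \<circ> sigma0) ((sigma0 \<circ> sigma1 p0 p1 p2) e)"
    by (simp add: e ba ab level_shift_def del: comp_apply)
  finally show "(sigma0 \<circ> sigma1 p0 p1 p2) ((sigma1 p0 p1 p2 \<circ> sigma0) e)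
      = (sigma1 p0 p1 p2 \<circ> sigma0) ((sigma0 \<circ> sigma1 p0 p1 p2) e)" .
qed

end
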